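(* $\psi_{d,\min}(\mathrm{KG}(6,2))=3$.
   Context: $\mathrm{KG}(6,2)$ is the Kneser graph whose vertices are the $2$-element subsets of $\{1,\dots,6\}$, two being adjacent iff disjoint. For a digraph $D$, let $N_+[v]=\{v\}\cup\{u:(v,u)\in E(D)\}$ and for a coloring $c$, $c(U)=\{c(u):u\in U\}$. The directed local chromatic number is $\psi_d(D)=\min_c\max_{v\in V(D)}|c(N_+[v])|$, the minimum over proper colorings $c$ of the underlying undirected graph. For an undirected graph $G$, $\psi_{d,\min}(G)$ is the minimum of $\psi_d(\vec G)$ over all orientations $\vec G$ of $G$ (each edge given exactly one direction). *)

theory Defs
  imports Main
begin

(* Digraphs are given by a vertex set V and an arc set A \<subseteq> V \<times> V.
   Undirected graphs are given by a vertex set V and a symmetric, irreflexive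
   adjacency relation E. *)

definition out_closed_nbhd :: "('a \<times> 'a) set \<Rightarrow> 'a \<Rightarrow> 'a set" where
  "out_closed_nbhd A v = {v} \<union> {u. (v, u) \<in> A}"

definition proper_coloring_digraph :: "'a set \<Rightarrow> ('a \<times> 'a) set \<Rightarrow> ('a \<Rightarrow> nat) \<Rightarrow> bool" where
  "proper_coloring_digraph V A c \<longleftrightarrow>
     (\<forall>u\<in>V. \<forall>v\<in>V. ((u, v) \<in> A \<or> (v, u) \<in> A) \<longrightarrow> c u \<noteq> c v)"

definition psi_d :: "'a set \<Rightarrow> ('a \<times> 'a) set \<Rightarrow> nat" where
  "psi_d V A = (LEAST k. \<exists>c. proper_coloring_digraph V A c \<and>
                          (\<forall>v\<in>V. card (c ` out_closed_nbhd A v) \<le> k))"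

definition is_orientation :: "'a set \<Rightarrow> ('a \<Rightarrow> 'a \<Rightarrow> bool) \<Rightarrow> ('a \<times> 'a) set \<Rightarrow> bool" where
  "is_orientation V E A \<longleftrightarrow>
     A \<subseteq> {(u, v). u \<in> V \<and> v \<in> V \<and> E u v} \<and>
     (\<forall>u\<in>V. \<forall>v\<in>V. E u v \<longrightarrow> ((u, v) \<in> A \<longleftrightarrow> (v, u) \<notin> A))"

definition psi_d_min :: "'a set \<Rightarrow> ('a \<Rightarrow> 'a \<Rightarrow> bool) \<Rightarrow> nat" where
  "psi_d_min V E = (LEAST k. \<exists>A. is_orientation V E A \<and> psi_d V A = k)"

definition kneser_vertices :: "nat \<Rightarrow> nat \<Rightarrow> nat set set" where
  "kneser_vertices n k = {S. S \<subseteq> {1..n} \<and> card S = k}"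

definition kneser_adj :: "nat set \<Rightarrow> nat set \<Rightarrow> bool" where
  "kneser_adj S T \<longleftrightarrow> S \<inter> T = {}"

end

theory Submission
  imports Defs
begin

(* If every closed out-neighbourhood sees at most two colours, then all out-neighbours of
   a vertex share one colour.  In KG(6,2) every edge lies in exactly one triangle
   {ab, cd, ef}, and such a triangle must be oriented cyclically, so every vertex has exactly
   one out-neighbour in each of its three triangles.  An out-neighbourhood {cd, ce, de} of ab
   is impossible: no vertex meeting {c, d, e} in one point can then point to cd, which fixes
   the out-neighbours ae, be, ef of cd, and after that neither bc nor df can point to ae,
   although one of them must.  So the in-neighbours of every vertex ab form a triangle, and
   their out-neighbourhoods force a whole star {px. x ~= p}, p in {a, b}, into the colour
   of ab.  Two disjoint vertices would then get the same colour.
   For the upper bound, orient KG(6,2) along the proper 4-colouring S |-> min (Min S) 4 and a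
   tournament on the four colours in which every colour has out-degree at most 2. *)

lemma card_le_2_eq:
  assumes "finite S" "card S \<le> 2" "x \<in> S" "y \<in> S" "z \<in> S" "x \<noteq> y" "x \<noteq> z"
  shows "y = z"
proof (rule ccontr)
  assume "y \<noteq> z"
  then have "card {x, y, z} = 3"
    using assms by auto
  moreover have "card {x, y, z} \<le> card S"
    using assms by (intro card_mono) auto
  ultimately show False
    using assms by simp
qed

lemma orientation_subset: "is_orientation V E A \<Longrightarrow> A \<subseteq> V \<times> V"
  unfolding is_orientation_def by auto

lemma proper_coloring_digraphI:
  assumes "\<forall>(u, w)\<in>A. E u w" "\<forall>u\<in>V. \<forall>w\<in>V. E u w \<longrightarrow> c u \<noteq> c w"
  shows "proper_coloring_digraph V A c"
  unfolding proper_coloring_digraph_def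
proof (intro ballI impI)
  fix u w assume "u \<in> V" "w \<in> V" "(u, w) \<in> A \<or> (w, u) \<in> A"
  then have "E u w \<or> E w u"
    using assms(1) by blast
  then show "c u \<noteq> c w"
    using assms(2) \<open>u \<in> V\<close> \<open>w \<in> V\<close> by metis
qed

lemma orientation_arcs_adjacent: "is_orientation V E A \<Longrightarrow> \<forall>(u, w)\<in>A. E u w"
  unfolding is_orientation_def by blast

lemma out_neighbours_same_color:
  assumes c: "proper_coloring_digraph V A c" and A: "A \<subseteq> V \<times> V" "finite V" "v \<in> V"
    and two: "card (c ` out_closed_nbhd A v) \<le> 2" and arcs: "(v, w) \<in> A" "(v, w') \<in> A"
  shows "c w = c w'"
proof -
  have "out_closed_nbhd A v \<subseteq> V"
    using A unfolding out_closed_nbhd_def by auto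
  then have "finite (c ` out_closed_nbhd A v)"
    using \<open>finite V\<close> finite_subset by blast
  moreover have "c v \<in> c ` out_closed_nbhd A v" "c w \<in> c ` out_closed_nbhd A v"
    "c w' \<in> c ` out_closed_nbhd A v"
    using arcs unfolding out_closed_nbhd_def by auto
  moreover have "c v \<noteq> c w" "c v \<noteq> c w'"
    using c A arcs unfolding proper_coloring_digraph_def by blast+
  ultimately show ?thesis
    by (rule card_le_2_eq[OF _ two])
qed

lemma orientation_triangle_cyclic:
  assumes A: "is_orientation V E A" and c: "proper_coloring_digraph V A c" and "finite V"
    and two: "\<forall>v\<in>V. card (c ` out_closed_nbhd A v) \<le> 2"
    and V: "u \<in> V" "v \<in> V" "w \<in> V" and "E v w" "E w u" and uv: "(u, v) \<in> A"
  shows "(v, w) \<in> A"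
proof (rule ccontr)
  assume "(v, w) \<notin> A"
  then have wv: "(w, v) \<in> A"
    using A V \<open>E v w\<close> unfolding is_orientation_def by blast
  have same: "c x = c y" if "z \<in> V" "(z, x) \<in> A" "(z, y) \<in> A" for x y z
    using out_neighbours_same_color[OF c orientation_subset[OF A] \<open>finite V\<close>] two that by blast
  have "(u, w) \<in> A \<or> (w, u) \<in> A"
    using A V \<open>E w u\<close> unfolding is_orientation_def by blast
  then show False
  proof
    assume "(u, w) \<in> A"
    then have "c v = c w" using same V uv by blast
    then show False using c V wv unfolding proper_coloring_digraph_def by blast
  next
    assume "(w, u) \<in> A"
    then have "c v = c u" using same V wv by blast
    then show False using c V uv unfolding proper_coloring_digraph_def by blast
  qed
qed

lemma psi_d_attained:
  assumes "proper_coloring_digraph V A c" "\<forall>v\<in>V. card (c ` out_closed_nbhd A v) \<le> k"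
  shows "\<exists>c'. proper_coloring_digraph V A c' \<and>
           (\<forall>v\<in>V. card (c' ` out_closed_nbhd A v) \<le> psi_d V A)"
proof -
  let ?bounded = "\<lambda>k. \<exists>c. proper_coloring_digraph V A c \<and>
    (\<forall>v\<in>V. card (c ` out_closed_nbhd A v) \<le> k)"
  have "?bounded k"
    using assms by blast
  then have "?bounded (Least ?bounded)"
    by (rule LeastI)
  then show ?thesis
    unfolding psi_d_def .
qed

definition color_orientation ::
    "'a set \<Rightarrow> ('a \<Rightarrow> 'a \<Rightarrow> bool) \<Rightarrow> ('a \<Rightarrow> 'c) \<Rightarrow> ('c \<Rightarrow> 'c \<Rightarrow> bool) \<Rightarrow>
     ('a \<times> 'a) set" where
  "color_orientation V E c R = {(u, w). u \<in> V \<and> w \<in> V \<and> E u w \<and> R (c u) (c w)}"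

lemma is_orientation_color_orientation:
  assumes sym: "symp E" and proper: "\<forall>u\<in>V. \<forall>w\<in>V. E u w \<longrightarrow> c u \<noteq> c w"
    and tournament: "\<And>a b. a \<noteq> b \<Longrightarrow> R a b \<longleftrightarrow> \<not> R b a"
  shows "is_orientation V E (color_orientation V E c R)"
  unfolding is_orientation_def
proof (intro conjI ballI impI)
  show "color_orientation V E c R \<subseteq> {(u, w). u \<in> V \<and> w \<in> V \<and> E u w}"
    unfolding color_orientation_def by blast
  fix u w assume "u \<in> V" "w \<in> V" "E u w"
  then have "E w u" "c u \<noteq> c w"
    using sympD[OF sym] proper by blast+
  then show "(u, w) \<in> color_orientation V E c R \<longleftrightarrow> (w, u) \<notin> color_orientation V E c R"
    using tournament[OF \<open>c u \<noteq> c w\<close>] \<open>u \<in> V\<close> \<open>w \<in> V\<close> \<open>E u w\<close>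
    unfolding color_orientation_def by auto
qed

lemma psi_d_color_orientation_le:
  fixes c :: "'a \<Rightarrow> nat"
  assumes "finite V" and proper: "\<forall>u\<in>V. \<forall>w\<in>V. E u w \<longrightarrow> c u \<noteq> c w"
    and out: "\<And>v. v \<in> V \<Longrightarrow> card {b \<in> c ` V. R (c v) b} \<le> d"
  shows "psi_d V (color_orientation V E c R) \<le> Suc d"
  unfolding psi_d_def
proof (rule Least_le, intro exI conjI ballI)
  show "proper_coloring_digraph V (color_orientation V E c R) c"
    using proper unfolding color_orientation_def by (intro proper_coloring_digraphI) auto
  fix v assume "v \<in> V"
  have "c ` out_closed_nbhd (color_orientation V E c R) v
      \<subseteq> insert (c v) {b \<in> c ` V. R (c v) b}"
    unfolding out_closed_nbhd_def color_orientation_def by auto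
  then have "card (c ` out_closed_nbhd (color_orientation V E c R) v)
             \<le> card (insert (c v) {b \<in> c ` V. R (c v) b})"
    using \<open>finite V\<close> by (intro card_mono) auto
  also have "\<dots> \<le> Suc d"
    using out[OF \<open>v \<in> V\<close>] by (simp add: card_insert_le_m1)
  finally show "card (c ` out_closed_nbhd (color_orientation V E c R) v) \<le> Suc d" .
qed

lemma finite_kneser_vertices: "finite (kneser_vertices n k)"
  unfolding kneser_vertices_def by (rule finite_subset[of _ "Pow {1..n}"]) auto

lemma kneser_vertexD:
  assumes "0 < k" "S \<in> kneser_vertices n k"
  shows "finite S" "S \<noteq> {}" "S \<subseteq> {1..n}" "card S = k"
proof -
  show "S \<subseteq> {1..n}" "card S = k"
    using assms(2) unfolding kneser_vertices_def by auto
  then show "finite S" "S \<noteq> {}"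
    using assms(1) finite_subset by fastforce+
qed

definition kneser_min_coloring :: "nat \<Rightarrow> nat \<Rightarrow> nat set \<Rightarrow> nat" where
  "kneser_min_coloring n k S = min (Min S) (n - 2 * k + 2)"

lemma kneser_min_coloring_ge_1:
  assumes "0 < k" "S \<in> kneser_vertices n k"
  shows "1 \<le> kneser_min_coloring n k S"
proof -
  note S = kneser_vertexD[OF assms]
  have "1 \<le> Min S"
    using Min_in[OF S(1,2)] S(3) by fastforce
  then show ?thesis
    unfolding kneser_min_coloring_def by simp
qed

lemma kneser_min_coloring_proper:
  assumes "0 < k" "S \<in> kneser_vertices n k" "T \<in> kneser_vertices n k" "kneser_adj S T"
  shows "kneser_min_coloring n k S \<noteq> kneser_min_coloring n k T"
proof
  define m where "m = n - 2 * k + 2"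
  assume eq: "kneser_min_coloring n k S = kneser_min_coloring n k T"
  note S = kneser_vertexD[OF assms(1,2)] and T = kneser_vertexD[OF assms(1,3)]
  have disj: "S \<inter> T = {}"
    using assms(4) unfolding kneser_adj_def .
  show False
  proof (cases "Min S < m \<or> Min T < m")
    case True
    then have "Min S = Min T"
      using eq unfolding kneser_min_coloring_def m_def by linarith
    then show False
      using disj Min_in[OF S(1,2)] Min_in[OF T(1,2)] by auto
  next
    case False
    have "S \<union> T \<subseteq> {m..n}"
    proof
      fix x assume "x \<in> S \<union> T"
      then have "Min S \<le> x \<or> Min T \<le> x" "x \<le> n"
        using S T by auto
      then show "x \<in> {m..n}"
        using False by auto
    qed
    then have "card (S \<union> T) \<le> card {m..n}"
      by (rule card_mono[OF finite_atLeastAtMost])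
    then have "card (S \<union> T) \<le> Suc n - m"
      by simp
    moreover have "card (S \<union> T) = 2 * k"
      using S T disj by (simp add: card_Un_disjoint)
    ultimately show False
      using \<open>0 < k\<close> unfolding m_def by linarith
  qed
qed

lemma kneser_min_coloring_le: "kneser_min_coloring n k S \<le> n - 2 * k + 2"
  unfolding kneser_min_coloring_def by simp

lemma symp_kneser_adj: "symp kneser_adj"
  unfolding kneser_adj_def by (rule sympI) blast

lemma kneser62_min_coloring_proper:
  "\<forall>S\<in>kneser_vertices 6 2. \<forall>T\<in>kneser_vertices 6 2. kneser_adj S T \<longrightarrow>
     kneser_min_coloring 6 2 S \<noteq> kneser_min_coloring 6 2 T"
  using kneser_min_coloring_proper[of 2] by simp

(* a, ..., f enumerate {1..6}, so {a, b}, {c, d}, {e, f} is a triangle of KG(6,2); the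
   lemmas below are applied to permuted labellings, which is how the symmetry enters. *)
definition six_labels :: "nat \<Rightarrow> nat \<Rightarrow> nat \<Rightarrow> nat \<Rightarrow> nat \<Rightarrow> nat \<Rightarrow> bool" where
  "six_labels a b c d e f \<longleftrightarrow> {a, b, c, d, e, f} = {1..6}"

lemma six_labels_distinct: "six_labels a b c d e f \<Longrightarrow> distinct [a, b, c, d, e, f]"
proof -
  assume "six_labels a b c d e f"
  then have "card (set [a, b, c, d, e, f]) = length [a, b, c, d, e, f]"
    unfolding six_labels_def by simp
  then show ?thesis
    by (rule card_distinct)
qed

lemma six_labels_triangle:
  assumes "six_labels a b c d e f"
  shows "{a, b} \<in> kneser_vertices 6 2" "{c, d} \<in> kneser_vertices 6 2"
    "{e, f} \<in> kneser_vertices 6 2" and "kneser_adj {a, b} {c, d}" "kneser_adj {c, d} {e, f}" "kneser_adj {e, f} {a, b}"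
  using assms six_labels_distinct[OF assms]
  unfolding six_labels_def kneser_vertices_def kneser_adj_def by auto

locale kneser62_two_out_colors =
  fixes A :: "(nat set \<times> nat set) set" and col :: "nat set \<Rightarrow> nat"
  assumes orientation: "is_orientation (kneser_vertices 6 2) kneser_adj A"
    and proper: "proper_coloring_digraph (kneser_vertices 6 2) A col"
    and two_colors: "\<forall>v\<in>kneser_vertices 6 2. card (col ` out_closed_nbhd A v) \<le> 2"
begin

abbreviation arc :: "nat set \<Rightarrow> nat set \<Rightarrow> bool" where
  "arc u w \<equiv> (u, w) \<in> A"

lemma arc_either_way:
  assumes L: "six_labels a b c d e f"
  shows "arc {a, b} {c, d} \<or> arc {c, d} {a, b}"
  using orientation six_labels_triangle[OF L] unfolding is_orientation_def by blast

lemma arc_cyclic: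
  assumes L: "six_labels a b c d e f" and "arc {a, b} {c, d}"
  shows "arc {c, d} {e, f}"
  using orientation_triangle_cyclic[OF orientation proper finite_kneser_vertices two_colors]
    six_labels_triangle[OF L] assms(2) by blast

lemma in_arc_of_out_arc:
  assumes L: "six_labels a b c d e f" and "arc {a, b} {c, d}"
  shows "arc {e, f} {a, b}"
proof -
  have "arc {c, d} {e, f}"
    using arc_cyclic L assms(2) by blast
  then show ?thesis
    using arc_cyclic[of c d e f a b] L by (simp add: six_labels_def insert_commute)
qed

lemma out_arc_in_triangle:
  assumes L: "six_labels a b c d e f"
  shows "arc {a, b} {c, d} \<or> arc {a, b} {e, f}"
  using arc_either_way[OF L] arc_cyclic[of c d a b e f] L
  by (auto simp: six_labels_def insert_commute)

lemma in_arc_in_triangle: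
  assumes L: "six_labels a b c d e f"
  shows "arc {c, d} {a, b} \<or> arc {e, f} {a, b}"
  using arc_either_way[OF L] in_arc_of_out_arc[OF L] by blast

lemma same_color: "arc u w \<Longrightarrow> arc u w' \<Longrightarrow> col w = col w'"
  using out_neighbours_same_color[OF proper orientation_subset[OF orientation]
      finite_kneser_vertices _ _] two_colors orientation_subset[OF orientation] by blast

lemma color_disjoint:
  assumes L: "six_labels a b c d e f"
  shows "col {a, b} \<noteq> col {c, d}"
  using proper arc_either_way[OF L] six_labels_triangle[OF L]
  unfolding proper_coloring_digraph_def by blast

lemma no_arc_into_monochromatic_triangle:
  assumes L: "six_labels a b c d e f"
    and "col {c, e} = col {c, d}" "col {d, e} = col {c, d}"
  shows "\<not> arc {a, e} {c, d}"
proof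
  assume ae_cd: "arc {a, e} {c, d}"
  have "arc {a, e} {b, c} \<or> arc {a, e} {d, f}"
    using out_arc_in_triangle[of a e b c d f] L by (simp add: six_labels_def insert_commute)
  moreover have "col {b, c} \<noteq> col {d, e}" "col {d, f} \<noteq> col {c, e}"
    using color_disjoint[of b c d e a f] color_disjoint[of d f c e a b] L
    by (simp_all add: six_labels_def insert_commute)
  ultimately show False
    using same_color[OF ae_cd] assms(2,3) by metis
qed

lemma no_arc_into_monochromatic_star:
  assumes L: "six_labels a b c d e f"
    and "col {b, e} = col {a, e}" "col {d, e} \<noteq> col {a, e}"
  shows "\<not> arc {b, c} {a, e}"
proof
  assume bc_ae: "arc {b, c} {a, e}"
  have "arc {b, c} {a, f} \<or> arc {b, c} {d, e}"
    using out_arc_in_triangle[of b c a f d e] L by (simp add: six_labels_def insert_commute)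
  moreover have "col {a, f} \<noteq> col {b, e}"
    using color_disjoint[of a f b e c d] L by (simp add: six_labels_def insert_commute)
  ultimately show False
    using same_color[OF bc_ae] assms(2,3) by metis
qed

lemma out_neighbours_not_triangle:
  assumes L: "six_labels a b c d e f"
    and cd: "arc {a, b} {c, d}" and ce: "arc {a, b} {c, e}" and de: "arc {a, b} {d, e}"
  shows False
proof -
  have ce_cd: "col {c, e} = col {c, d}" and de_cd: "col {d, e} = col {c, d}"
    using same_color cd ce de by blast+
  have L': "six_labels c d a e b f" "six_labels b a c d e f" "six_labels c d b e a f"
    "six_labels a f d c e b" "six_labels a e b c d f"
    using L by (simp_all add: six_labels_def insert_commute)
  have "\<not> arc {a, e} {c, d}" "\<not> arc {b, e} {c, d}"
    using no_arc_into_monochromatic_triangle[OF L ce_cd de_cd]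
      no_arc_into_monochromatic_triangle[OF L'(2) ce_cd de_cd] by simp_all
  then have cd_ae: "arc {c, d} {a, e}" and cd_be: "arc {c, d} {b, e}"
    using arc_either_way[OF L'(1)] arc_either_way[OF L'(3)] by blast+
  have cd_ef: "arc {c, d} {e, f}"
    using arc_cyclic[OF L cd] .
  have "col {c, d} \<noteq> col {a, e}"
    using color_disjoint[OF L'(1)] .
  moreover have "col {b, e} = col {a, e}" "col {e, f} = col {a, e}"
    using same_color cd_ae cd_be cd_ef by blast+
  ultimately have "\<not> arc {b, c} {a, e}" "\<not> arc {f, d} {a, e}"
    using no_arc_into_monochromatic_star[OF L] no_arc_into_monochromatic_star[OF L'(4)]
      ce_cd de_cd by (simp_all add: insert_commute)
  then show False
    using in_arc_in_triangle[OF L'(5)] by (simp add: insert_commute)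
qed

lemma out_star_of_in_arc:
  assumes L: "six_labels a b c d e f" and cd_ab: "arc {c, d} {a, b}"
  shows "(arc {c, d} {a, e} \<and> arc {c, d} {a, f}) \<or> (arc {c, d} {b, e} \<and> arc {c, d} {b, f})"
proof -
  have L': "six_labels c d a e b f" "six_labels c d a f b e" "six_labels c d a b e f"
    "six_labels c d a b f e"
    using L by (simp_all add: six_labels_def insert_commute)
  show ?thesis
    using out_arc_in_triangle[OF L'(1)] out_arc_in_triangle[OF L'(2)]
      out_neighbours_not_triangle[OF L'(3) cd_ab] out_neighbours_not_triangle[OF L'(4) cd_ab]
    by blast
qed

lemma monochromatic_star_of_in_triangle:
  assumes L: "six_labels a b c d e f"
    and cd: "arc {c, d} {a, b}" and ce: "arc {c, e} {a, b}" and de: "arc {d, e} {a, b}"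
  shows "\<exists>p\<in>{a, b}. \<forall>x\<in>{1..6} - {p}. col {p, x} = col {a, b}"
proof -
  have L': "six_labels a b c e d f" "six_labels a b d e c f"
    using L by (simp_all add: six_labels_def insert_commute)
  have "(col {a, e} = col {a, b} \<and> col {a, f} = col {a, b}) \<or>
      (col {b, e} = col {a, b} \<and> col {b, f} = col {a, b})"
    "(col {a, d} = col {a, b} \<and> col {a, f} = col {a, b}) \<or>
      (col {b, d} = col {a, b} \<and> col {b, f} = col {a, b})"
    "(col {a, c} = col {a, b} \<and> col {a, f} = col {a, b}) \<or>
      (col {b, c} = col {a, b} \<and> col {b, f} = col {a, b})"
    using out_star_of_in_arc[OF L cd] out_star_of_in_arc[OF L'(1) ce]
      out_star_of_in_arc[OF L'(2) de] same_color[OF cd] same_color[OF ce] same_color[OF de] by metis+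
  moreover have "col {a, e} \<noteq> col {b, d}" "col {a, e} \<noteq> col {b, c}" "col {a, d} \<noteq> col {b, c}"
    "col {b, e} \<noteq> col {a, d}" "col {b, e} \<noteq> col {a, c}" "col {b, d} \<noteq> col {a, c}"
    using color_disjoint[of a e b d c f] color_disjoint[of a e b c d f]
      color_disjoint[of a d b c e f] color_disjoint[of b e a d c f]
      color_disjoint[of b e a c d f] color_disjoint[of b d a c e f] L
    by (simp_all add: six_labels_def insert_commute)
  ultimately have "(\<forall>x\<in>{b, c, d, e, f}. col {a, x} = col {a, b}) \<or>
      (\<forall>x\<in>{a, c, d, e, f}. col {b, x} = col {a, b})"
    by (auto simp: insert_commute)
  moreover have "{1..6} - {a} = {b, c, d, e, f}" "{1..6} - {b} = {a, c, d, e, f}"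
    using L six_labels_distinct[OF L] unfolding six_labels_def by auto
  ultimately show ?thesis
    by auto
qed

lemma monochromatic_star:
  assumes L: "six_labels a b c d e f"
  shows "\<exists>p\<in>{a, b}. \<forall>x\<in>{1..6} - {p}. col {p, x} = col {a, b}"
proof -
  have L': "six_labels a b c e d f" "six_labels a b c f d e" "six_labels a b e f c d"
    "six_labels a b d f c e" "six_labels a b d e c f" "six_labels a b d e f c"
    "six_labels a b c d f e" "six_labels a b c e f d"
    using L by (simp_all add: six_labels_def insert_commute)
  have "arc {a, b} {c, d} \<or> arc {a, b} {e, f}" "arc {a, b} {c, e} \<or> arc {a, b} {d, f}"
    "arc {a, b} {c, f} \<or> arc {a, b} {d, e}"
    using out_arc_in_triangle[OF L] out_arc_in_triangle[OF L'(1)] out_arc_in_triangle[OF L'(2)]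
    by blast+
  \<comment> \<open>Each of the eight choices of out-neighbours is either a triangle, which is
    impossible, or a star at c, d, e or f, whose complement is a triangle of in-neighbours.\<close>
  moreover note in_arc_of_out_arc[OF L] in_arc_of_out_arc[OF L'(3)]
    in_arc_of_out_arc[OF L'(1)] in_arc_of_out_arc[OF L'(4)]
    in_arc_of_out_arc[OF L'(2)] in_arc_of_out_arc[OF L'(5)]
  moreover note out_neighbours_not_triangle[OF L] out_neighbours_not_triangle[OF L'(7)]
    out_neighbours_not_triangle[OF L'(8)] out_neighbours_not_triangle[OF L'(6)]
  moreover note monochromatic_star_of_in_triangle[OF L]
    monochromatic_star_of_in_triangle[OF L'(6)] monochromatic_star_of_in_triangle[OF L'(7)]
    monochromatic_star_of_in_triangle[OF L'(8)]
  ultimately show ?thesis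
    by blast
qed

lemma inconsistent: False
proof -
  have "six_labels 1 2 3 4 5 6" "six_labels 3 4 1 2 5 6"
    unfolding six_labels_def by auto
  then obtain p q where "p \<in> {1, 2}" "\<forall>x\<in>{1..6} - {p}. col {p, x} = col {1, 2}"
    and "q \<in> {3, 4}" "\<forall>x\<in>{1..6} - {q}. col {q, x} = col {3, 4}"
    using monochromatic_star by meson
  moreover have "q \<in> {1..6} - {p}" "p \<in> {1..6} - {q}" and "{q, p} = {p, q}"
    using \<open>p \<in> {1, 2}\<close> \<open>q \<in> {3, 4}\<close> by auto
  ultimately have "col {1, 2} = col {3, 4}"
    by metis
  moreover have "col {1, 2} \<noteq> col {3, 4}"
    using color_disjoint \<open>six_labels 1 2 3 4 5 6\<close> .
  ultimately show False
    by simp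
qed

end

lemma psi_d_kneser62_ge_3:
  assumes orientation: "is_orientation (kneser_vertices 6 2) kneser_adj A"
  shows "3 \<le> psi_d (kneser_vertices 6 2) A"
proof (rule ccontr)
  assume "\<not> 3 \<le> psi_d (kneser_vertices 6 2) A"
  have "proper_coloring_digraph (kneser_vertices 6 2) A (kneser_min_coloring 6 2)"
    using orientation_arcs_adjacent[OF orientation] kneser62_min_coloring_proper
    by (rule proper_coloring_digraphI)
  moreover have "card (kneser_min_coloring 6 2 ` out_closed_nbhd A v) \<le> 5" for v
  proof -
    have "kneser_min_coloring 6 2 ` out_closed_nbhd A v \<subseteq> {..4}"
      using kneser_min_coloring_le[of 6 2] by auto
    then have "card (kneser_min_coloring 6 2 ` out_closed_nbhd A v) \<le> card {..4::nat}"
      by (rule card_mono[OF finite_atMost])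
    then show ?thesis
      by simp
  qed
  ultimately obtain c where "proper_coloring_digraph (kneser_vertices 6 2) A c"
    "\<forall>v\<in>kneser_vertices 6 2. card (c ` out_closed_nbhd A v) \<le> psi_d (kneser_vertices 6 2) A"
    using psi_d_attained by blast
  then interpret kneser62_two_out_colors A c
    using orientation \<open>\<not> 3 \<le> psi_d (kneser_vertices 6 2) A\<close> by unfold_locales auto
  show False
    by (rule inconsistent)
qed

definition four_color_tournament :: "nat \<Rightarrow> nat \<Rightarrow> bool" where
  "four_color_tournament a b \<longleftrightarrow> (a = 1 \<and> b = 4) \<or> (b < a \<and> \<not> (a = 4 \<and> b = 1))"

lemma four_color_tournament_asym:
  "a \<noteq> b \<Longrightarrow> four_color_tournament a b \<longleftrightarrow> \<not> four_color_tournament b a"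
  unfolding four_color_tournament_def by auto

lemma card_four_color_tournament_out:
  assumes "a \<in> {1..4}"
  shows "card {b \<in> {1..4}. four_color_tournament a b} \<le> 2"
proof -
  have "{b \<in> {1..4}. four_color_tournament a b} =
      (if a = 1 then {4} else if a = 2 then {1} else if a = 3 then {1, 2} else {2, 3})"
    using assms unfolding four_color_tournament_def by auto
  then show ?thesis
    by simp
qed

definition kneser62_orientation :: "(nat set \<times> nat set) set" where
  "kneser62_orientation = color_orientation (kneser_vertices 6 2) kneser_adj
     (kneser_min_coloring 6 2) four_color_tournament"

lemma is_orientation_kneser62_orientation:
  "is_orientation (kneser_vertices 6 2) kneser_adj kneser62_orientation"
  unfolding kneser62_orientation_def
  using symp_kneser_adj kneser62_min_coloring_proper four_color_tournament_asym
  by (rule is_orientation_color_orientation)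

lemma psi_d_kneser62_orientation_le_3:
  "psi_d (kneser_vertices 6 2) kneser62_orientation \<le> 3"
proof -
  let ?c = "kneser_min_coloring 6 2"
  have colors: "?c ` kneser_vertices 6 2 \<subseteq> {1..4}"
    using kneser_min_coloring_ge_1[of 2] kneser_min_coloring_le[of 6 2] by fastforce
  have "card {b \<in> ?c ` kneser_vertices 6 2. four_color_tournament (?c v) b} \<le> 2"
    if "v \<in> kneser_vertices 6 2" for v
  proof -
    have "card {b \<in> ?c ` kneser_vertices 6 2. four_color_tournament (?c v) b}
        \<le> card {b \<in> {1..4}. four_color_tournament (?c v) b}"
      using colors by (intro card_mono) auto
    also have "\<dots> \<le> 2"
      using colors that by (intro card_four_color_tournament_out) auto
    finally show ?thesis .
  qed
  then have "psi_d (kneser_vertices 6 2) kneser62_orientation \<le> Suc 2"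
    unfolding kneser62_orientation_def
    by (rule psi_d_color_orientation_le[OF finite_kneser_vertices kneser62_min_coloring_proper])
  then show ?thesis
    by simp
qed

theorem mainTheorem4:
  shows "psi_d_min (kneser_vertices 6 2) kneser_adj = 3"
  unfolding psi_d_min_def
proof (rule Least_equality)
  show "\<exists>A. is_orientation (kneser_vertices 6 2) kneser_adj A \<and>
      psi_d (kneser_vertices 6 2) A = 3"
    using is_orientation_kneser62_orientation psi_d_kneser62_orientation_le_3
      psi_d_kneser62_ge_3[OF is_orientation_kneser62_orientation] by (intro exI conjI) simp_all
next
  fix k
  assume "\<exists>A. is_orientation (kneser_vertices 6 2) kneser_adj A \<and> psi_d (kneser_vertices 6 2) A = k"
  then show "3 \<le> k"
    using psi_d_kneser62_ge_3 by blast
qed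

end
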